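(* For a positive integer $n$ and nonnegative integers $r,s,m$, \begin{multline*} \int_0^{\infty} \cdots \int_0^{\infty} \prod_{i=1}^n (t_0 + t_{1} +\dots + t_{i-1})^r (t_i + t_{i+1} +\dots + t_{n})^s \prod_{1\le i<j\le n} (t_i + t_{i+1} +\dots + t_{j-1})^m\, e^{-t_0-t_1-\dots-t_{n}}\, dt_0\, dt_1 \cdots dt_{n}\\ =\frac{((r+s+1)n+mn(n-1)/2)!}{n!} \int_0^1\cdots\int_0^1 \prod_{i=1}^n x_i^r (1-x_i)^s \prod_{1\le i<j\le n} |x_i-x_j|^{m}\, dx_1\cdots dx_n. \end{multline*} *)

theory Defs
  imports "HOL-Analysis.Analysis"
begin

end

theory Submission
  imports Defs "HOL-Probability.Distributions" "HOL-Combinatorics.Permutations"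
begin

text \<open>On the left substitute the partial sums \<open>u\<^sub>k = t\<^sub>0 + \<dots> + t\<^sub>k\<close>, a unimodular change of
  variables onto the cone \<open>0 < u\<^sub>0 < \<dots> < u\<^sub>n\<close>, and then \<open>u\<^sub>k = u\<^sub>n y\<^sub>k\<close> for \<open>k < n\<close>. The
  integrand is homogeneous, so it factors into \<open>u\<^sub>n\<^sup>N exp (- u\<^sub>n)\<close> with
  \<open>N = (r + s + 1) n + m n (n - 1) / 2\<close> (the extra \<open>n\<close> is the Jacobian) times the Selberg
  integrand on the ordered simplex \<open>0 < y\<^sub>0 < \<dots> < y\<^sub>n\<^sub>-\<^sub>1 < 1\<close>; integrating out \<open>u\<^sub>n\<close> gives
  \<open>N!\<close>. On the right, the Selberg integrand is symmetric and almost every point of the cube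
  has distinct coordinates, so the cube is \<open>n!\<close> copies of the ordered simplex.\<close>

abbreviation lborel_on :: "nat set \<Rightarrow> (nat \<Rightarrow> real) measure" where
  "lborel_on I \<equiv> Pi\<^sub>M I (\<lambda>_. lborel)"

interpretation lborel_on: product_sigma_finite "\<lambda>_::nat. lborel :: real measure"
  by unfold_locales

lemma measurable_lborel_on_upd[measurable (raw)]:
  assumes "k \<in> I" and "g \<in> borel_measurable (lborel_on I)"
  shows "(\<lambda>x. x(k := g x)) \<in> measurable (lborel_on I) (lborel_on I)"
  by (rule measurable_fun_upd[where J=I]) (use assms in auto)

lemma measurable_lborel_on_reindex:
  assumes "q ` I \<subseteq> J"
  shows "(\<lambda>x. \<lambda>i\<in>I. x (q i)) \<in> measurable (lborel_on J) (lborel_on I)"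
  by (rule measurable_restrict) (use assms in auto)

lemma nn_integral_lborel_on_affine_coordinate:
  assumes fin: "finite I" and k: "k \<in> I"
    and f[measurable]: "f \<in> borel_measurable (lborel_on I)"
    and a[measurable]: "a \<in> borel_measurable (lborel_on I)"
    and b[measurable]: "b \<in> borel_measurable (lborel_on I)"
    and a_upd: "\<And>x y. a (x(k := y)) = a x" and b_upd: "\<And>x y. b (x(k := y)) = b x"
    and b_pos: "\<And>x. b x > 0"
  shows "(\<integral>\<^sup>+x. f (x(k := a x + b x * x k)) * ennreal (b x) \<partial>lborel_on I)
       = (\<integral>\<^sup>+x. f x \<partial>lborel_on I)"
proof -
  have I: "I = insert k (I - {k})" using k by auto
  have fin': "finite (I - {k})" "k \<notin> I - {k}" using fin by auto
  have "(\<lambda>x. f (x(k := a x + b x * x k)) * ennreal (b x)) \<in> borel_measurable (lborel_on I)"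
    using k by measurable
  then have "(\<integral>\<^sup>+x. f (x(k := a x + b x * x k)) * ennreal (b x) \<partial>lborel_on I)
     = (\<integral>\<^sup>+x. \<integral>\<^sup>+y. f (x(k := a x + b x * y)) * ennreal (b x) \<partial>lborel \<partial>lborel_on (I - {k}))"
    using lborel_on.product_nn_integral_insert[OF fin'] I by (simp add: a_upd b_upd)
  also have "\<dots> = (\<integral>\<^sup>+x. \<integral>\<^sup>+y. f (x(k := y)) \<partial>lborel \<partial>lborel_on (I - {k}))"
  proof (rule nn_integral_cong)
    fix x assume x: "x \<in> space (lborel_on (I - {k}))"
    have mf: "(\<lambda>y. f (x(k := y))) \<in> borel_measurable borel"
      using measurable_comp[OF measurable_component_update[OF x fin'(2)], of f] I f
      by (simp add: comp_def)
    have "(\<integral>\<^sup>+y. f (x(k := a x + b x * y)) * ennreal (b x) \<partial>lborel)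
       = ennreal (b x) * (\<integral>\<^sup>+y. f (x(k := a x + b x * y)) \<partial>lborel)"
      by (subst nn_integral_multc) (use mf in \<open>auto simp: mult.commute\<close>)
    also have "\<dots> = (\<integral>\<^sup>+y. f (x(k := y)) \<partial>lborel)"
      using nn_integral_real_affine[OF mf, of "b x" "a x"] b_pos[of x] by simp
    finally show "(\<integral>\<^sup>+y. f (x(k := a x + b x * y)) * ennreal (b x) \<partial>lborel)
       = (\<integral>\<^sup>+y. f (x(k := y)) \<partial>lborel)" .
  qed
  also have "\<dots> = (\<integral>\<^sup>+x. f x \<partial>lborel_on I)"
    using lborel_on.product_nn_integral_insert[OF fin', of f] I f by simp
  finally show ?thesis .
qed

lemma nn_integral_lborel_on_insert_factor:
  assumes fin: "finite I" and k: "k \<notin> I"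
    and f[measurable]: "f \<in> borel_measurable borel"
    and g: "g \<in> borel_measurable (lborel_on (insert k I))" "g \<in> borel_measurable (lborel_on I)"
    and g_upd: "\<And>x y. g (x(k := y)) = g x"
  shows "(\<integral>\<^sup>+x. f (x k) * g x \<partial>lborel_on (insert k I))
       = (\<integral>\<^sup>+y. f y \<partial>lborel) * (\<integral>\<^sup>+x. g x \<partial>lborel_on I)"
proof -
  have [measurable]: "(\<lambda>x. x k) \<in> borel_measurable (lborel_on (insert k I))" by simp
  have "(\<lambda>x. f (x k) * g x) \<in> borel_measurable (lborel_on (insert k I))"
    using g(1) by measurable
  then have "(\<integral>\<^sup>+x. f (x k) * g x \<partial>lborel_on (insert k I))
      = (\<integral>\<^sup>+x. (\<integral>\<^sup>+y. f y \<partial>lborel) * g x \<partial>lborel_on I)"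
    by (simp add: lborel_on.product_nn_integral_insert[OF fin k] g_upd nn_integral_multc)
  also have "\<dots> = (\<integral>\<^sup>+y. f y \<partial>lborel) * (\<integral>\<^sup>+x. g x \<partial>lborel_on I)"
    using g(2) by (rule nn_integral_cmult)
  finally show ?thesis .
qed

lemma AE_lborel_on_coordinate_neq:
  assumes fin: "finite I" and k: "k \<in> I"
    and c[measurable]: "c \<in> borel_measurable (lborel_on I)" and c_upd: "\<And>x y. c (x(k := y)) = c x"
  shows "AE x in lborel_on I. x k \<noteq> c x"
proof (rule AE_I')
  define N where "N = {x \<in> space (lborel_on I). x k = c x}"
  have [measurable]: "(\<lambda>x. x k) \<in> borel_measurable (lborel_on I)" using k by simp
  have N[measurable]: "N \<in> sets (lborel_on I)" unfolding N_def by measurable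
  have I: "I = insert k (I - {k})" using k by auto
  have fin': "finite (I - {k})" "k \<notin> I - {k}" using fin by auto
  have "emeasure (lborel_on I) N = (\<integral>\<^sup>+x. \<integral>\<^sup>+y. indicator N (x(k := y)) \<partial>lborel \<partial>lborel_on (I - {k}))"
    using lborel_on.product_nn_integral_insert[OF fin', of "indicator N"] I by simp
  also have "\<dots> = (\<integral>\<^sup>+x. \<integral>\<^sup>+y. indicator {c x} y \<partial>lborel \<partial>lborel_on (I - {k}))"
  proof (intro nn_integral_cong)
    fix x y assume "x \<in> space (lborel_on (I - {k}))"
    then have "x(k := y) \<in> space (lborel_on I)"
      using k by (auto simp: space_PiM PiE_def extensional_def)
    then show "indicator N (x(k := y)) = (indicator {c x} y :: ennreal)"
      using c_upd by (auto simp: N_def indicator_def)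
  qed
  finally show "N \<in> null_sets (lborel_on I)" using N by (simp add: null_sets_def)
  show "{x \<in> space (lborel_on I). \<not> x k \<noteq> c x} \<subseteq> N" by (auto simp: N_def)
qed

lemma distr_lborel_on_reindex:
  assumes q: "bij_betw q I J" and fin: "finite I"
  shows "distr (lborel_on J) (lborel_on I) (\<lambda>x. \<lambda>i\<in>I. x (q i)) = lborel_on I"
proof (rule lborel_on.PiM_eqI[OF fin])
  fix A :: "nat \<Rightarrow> real set" assume A: "\<And>i. i \<in> I \<Longrightarrow> A i \<in> sets lborel"
  let ?p = "inv_into I q"
  have p: "bij_betw ?p J I" using q by (rule bij_betw_inv_into)
  have qJ: "q ` I \<subseteq> J" using q by (auto simp: bij_betw_def)
  have pJ: "?p j \<in> I" if "j \<in> J" for j using p that by (rule bij_betw_apply)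
  have "(\<lambda>x. \<lambda>i\<in>I. x (q i)) -` Pi\<^sub>E I A \<inter> space (lborel_on J) = Pi\<^sub>E J (\<lambda>j. A (?p j))"
    using q p by (fastforce simp: space_PiM PiE_def Pi_def bij_betw_def f_inv_into_f inv_into_f_f
        extensional_def)
  then have "emeasure (distr (lborel_on J) (lborel_on I) (\<lambda>x. \<lambda>i\<in>I. x (q i))) (Pi\<^sub>E I A)
      = (\<Prod>j\<in>J. emeasure lborel (A (?p j)))"
    using A fin bij_betw_finite[OF q] pJ measurable_lborel_on_reindex[OF qJ]
    by (subst emeasure_distr) (auto intro!: lborel_on.emeasure_PiM sets_PiM_I_finite)
  also have "\<dots> = (\<Prod>i\<in>I. emeasure lborel (A i))"
    by (rule prod.reindex_bij_betw[OF p])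
  finally show "emeasure (distr (lborel_on J) (lborel_on I) (\<lambda>x. \<lambda>i\<in>I. x (q i))) (Pi\<^sub>E I A)
      = (\<Prod>i\<in>I. emeasure lborel (A i))" .
qed simp

lemma nn_integral_lborel_on_reindex:
  assumes q: "bij_betw q I J" and fin: "finite I" and f: "f \<in> borel_measurable (lborel_on I)"
  shows "(\<integral>\<^sup>+x. f (\<lambda>i\<in>I. x (q i)) \<partial>lborel_on J) = (\<integral>\<^sup>+x. f x \<partial>lborel_on I)"
proof -
  have mq: "(\<lambda>x. \<lambda>i\<in>I. x (q i)) \<in> measurable (lborel_on J) (lborel_on I)"
    using q by (intro measurable_lborel_on_reindex) (auto simp: bij_betw_def)
  show ?thesis
    using nn_integral_distr[OF mq, of f] distr_lborel_on_reindex[OF q fin] f by simp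
qed

definition partial_sums :: "nat \<Rightarrow> (nat \<Rightarrow> real) \<Rightarrow> nat \<Rightarrow> real" where
  "partial_sums k x = (\<lambda>i. if i \<le> k then \<Sum>j\<le>i. x j else x i)"

lemma partial_sums_0: "partial_sums 0 x = x"
  by (auto simp: partial_sums_def fun_eq_iff)

lemma partial_sums_Suc:
  "partial_sums (Suc k) x = (partial_sums k x)(Suc k := partial_sums k x (Suc k) + partial_sums k x k)"
  by (auto simp: partial_sums_def fun_eq_iff)

text \<open>The partial-sum map is a composition of shears \<open>x\<^sub>k \<mapsto> x\<^sub>k + x\<^sub>k\<^sub>-\<^sub>1\<close>,
  each of Jacobian one.\<close>

lemma nn_integral_partial_sums:
  assumes "finite I" "{..k} \<subseteq> I" and "h \<in> borel_measurable (lborel_on I)"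
  shows "(\<integral>\<^sup>+x. h (partial_sums k x) \<partial>lborel_on I) = (\<integral>\<^sup>+x. h x \<partial>lborel_on I)"
  using assms(2,3)
proof (induction k arbitrary: h)
  case 0
  then show ?case by (simp add: partial_sums_0)
next
  case (Suc k)
  note [measurable] = Suc.prems(2)
  have k: "k \<in> I" "Suc k \<in> I" and "{..k} \<subseteq> I" using Suc.prems by auto
  have "(\<lambda>x. h (x(Suc k := x (Suc k) + x k))) \<in> borel_measurable (lborel_on I)"
    using k by measurable
  then have "(\<integral>\<^sup>+x. h (partial_sums (Suc k) x) \<partial>lborel_on I)
      = (\<integral>\<^sup>+x. h (x(Suc k := x k + 1 * x (Suc k))) * ennreal 1 \<partial>lborel_on I)"
    using Suc.IH[of "\<lambda>x. h (x(Suc k := x (Suc k) + x k))"] \<open>{..k} \<subseteq> I\<close>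
    by (simp add: partial_sums_Suc add.commute)
  also have "\<dots> = (\<integral>\<^sup>+x. h x \<partial>lborel_on I)"
    by (rule nn_integral_lborel_on_affine_coordinate) (use assms(1) k in auto)
  finally show ?case .
qed

definition scale_below :: "nat \<Rightarrow> nat \<Rightarrow> (nat \<Rightarrow> real) \<Rightarrow> nat \<Rightarrow> real" where
  "scale_below n k x = (\<lambda>i. if i < k then x n * x i else x i)"

lemma measurable_scale_below[measurable]:
  assumes "n \<in> I" "{..<k} \<subseteq> I"
  shows "scale_below n k \<in> measurable (lborel_on I) (lborel_on I)"
proof -
  have "(\<lambda>x i. if i < k then x n * x i else x i) \<in> measurable (lborel_on I) (lborel_on I)"
  proof (rule measurable_PiM_single')
    fix i assume "i \<in> I"
    then show "(\<lambda>x. if i < k then x n * x i else x i) \<in> measurable (lborel_on I) lborel"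
      using assms by measurable
  qed (use assms in \<open>auto simp: space_PiM PiE_def extensional_def\<close>)
  then show ?thesis by (simp add: scale_below_def[abs_def])
qed

text \<open>The substitution \<open>x\<^sub>i \<mapsto> x\<^sub>n x\<^sub>i\<close> is not invertible where \<open>x\<^sub>n \<le> 0\<close>, hence the
  hypothesis that \<open>h\<close> vanishes there.\<close>

lemma nn_integral_scale_below:
  assumes fin: "finite I" and I: "{..n} \<subseteq> I" and "k \<le> n"
    and h[measurable]: "h \<in> borel_measurable (lborel_on I)"
    and h0: "\<And>x. x n \<le> 0 \<Longrightarrow> h x = 0"
  shows "(\<integral>\<^sup>+x. h (scale_below n k x) * ennreal (x n ^ k) \<partial>lborel_on I) = (\<integral>\<^sup>+x. h x \<partial>lborel_on I)"
  using \<open>k \<le> n\<close>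
proof (induction k)
  case 0
  have "scale_below n 0 x = x" for x by (auto simp: scale_below_def fun_eq_iff)
  then show ?case by simp
next
  case (Suc k)
  have k: "k \<in> I" "k < n" "{..<k} \<subseteq> I" and nI: "n \<in> I" using Suc.prems I by auto
  \<comment> \<open>only the values for \<open>x\<^sub>n > 0\<close> matter; elsewhere \<open>1\<close> keeps the coefficient positive\<close>
  define b where "b x = (if 0 < x n then x n else 1)" for x :: "nat \<Rightarrow> real"
  have [measurable]: "(\<lambda>x. x n) \<in> borel_measurable (lborel_on I)" using nI by simp
  have [measurable]: "b \<in> borel_measurable (lborel_on I)" unfolding b_def by measurable
  have mf: "(\<lambda>x. h (scale_below n k x) * ennreal (x n ^ k)) \<in> borel_measurable (lborel_on I)"
    using nI k by measurable
  have step: "h (scale_below n k (x(k := 0 + b x * x k))) * ennreal ((x(k := 0 + b x * x k)) n ^ k)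
        * ennreal (b x) = h (scale_below n (Suc k) x) * ennreal (x n ^ Suc k)" for x
  proof (cases "0 < x n")
    case True
    have "scale_below n k (x(k := 0 + b x * x k)) = scale_below n (Suc k) x"
      using True k by (auto simp: scale_below_def b_def fun_eq_iff less_Suc_eq)
    moreover have "ennreal (x n ^ k) * ennreal (x n) = ennreal (x n ^ Suc k)"
      using True by (simp add: ennreal_mult'[symmetric] mult.commute)
    ultimately show ?thesis using True k by (simp add: b_def mult.assoc)
  next
    case False
    then show ?thesis using h0 k by (simp add: scale_below_def b_def)
  qed
  have "(\<integral>\<^sup>+x. h (scale_below n (Suc k) x) * ennreal (x n ^ Suc k) \<partial>lborel_on I)
      = (\<integral>\<^sup>+x. h (scale_below n k (x(k := 0 + b x * x k))) * ennreal ((x(k := 0 + b x * x k)) n ^ k)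
          * ennreal (b x) \<partial>lborel_on I)"
    by (simp only: step)
  also have "\<dots> = (\<integral>\<^sup>+x. h (scale_below n k x) * ennreal (x n ^ k) \<partial>lborel_on I)"
    by (rule nn_integral_lborel_on_affine_coordinate[OF fin k(1) mf]) (use k in \<open>auto simp: b_def\<close>)
  also have "\<dots> = (\<integral>\<^sup>+x. h x \<partial>lborel_on I)"
    using Suc by simp
  finally show ?case .
qed

lemma bij_betw_sorted_pair_permutes:
  fixes \<sigma> :: "'a::linorder \<Rightarrow> 'a"
  assumes \<sigma>: "\<sigma> permutes A"
  shows "bij_betw (\<lambda>(i, j). (min (\<sigma> i) (\<sigma> j), max (\<sigma> i) (\<sigma> j)))
    {(i, j). i \<in> A \<and> j \<in> A \<and> i < j} {(i, j). i \<in> A \<and> j \<in> A \<and> i < j}"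
proof -
  let ?P = "{(i, j). i \<in> A \<and> j \<in> A \<and> i < j}"
  define g where "g = (\<lambda>(i, j). (min (\<sigma> i) (\<sigma> j), max (\<sigma> i) (\<sigma> j)))"
  have inj: "inj \<sigma>" and A: "\<And>i. \<sigma> i \<in> A \<longleftrightarrow> i \<in> A"
    using \<sigma> by (auto simp: permutes_inj permutes_in_image)
  have g_set: "g (i, j) = (a, b) \<longleftrightarrow> {\<sigma> i, \<sigma> j} = {a, b} \<and> a \<le> b" if "i \<noteq> j" for i j a b
    using inj that by (auto simp: g_def min_def max_def doubleton_eq_iff inj_eq)
  have "inj_on g ?P"
  proof (rule inj_onI, clarify)
    fix i j i' j' assume ij: "i \<in> A" "j \<in> A" "i < j" "i' \<in> A" "j' \<in> A" "i' < j'" "g (i, j) = g (i', j')"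
    obtain a b where "g (i', j') = (a, b)" by fastforce
    then have "{\<sigma> i, \<sigma> j} = {a, b}" "{\<sigma> i', \<sigma> j'} = {a, b}"
      using g_set[of i j a b] g_set[of i' j' a b] ij by auto
    then have "\<sigma> ` {i, j} = \<sigma> ` {i', j'}" by simp
    then have "{i, j} = {i', j'}"
      by (rule inj_image_eq_iff[OF inj, THEN iffD1])
    then show "i = i' \<and> j = j'"
      using ij by (auto simp: doubleton_eq_iff)
  qed
  moreover have "g ` ?P = ?P"
  proof (intro equalityI subsetI)
    fix p assume "p \<in> g ` ?P"
    then obtain i j where "p = g (i, j)" "i \<in> A" "j \<in> A" "i < j" by auto
    moreover have "\<sigma> i \<noteq> \<sigma> j" using inj \<open>i < j\<close> by (auto simp: inj_eq)
    ultimately show "p \<in> ?P"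
      using A by (auto simp: g_def min_def max_def)
  next
    fix p assume "p \<in> ?P"
    then obtain a b where p: "p = (a, b)" "a \<in> A" "b \<in> A" "a < b" by auto
    define i j where "i = inv \<sigma> a" and "j = inv \<sigma> b"
    have "\<sigma> i = a" "\<sigma> j = b"
      by (simp_all add: i_def j_def permutes_inverses(1)[OF \<sigma>])
    then have ij: "\<sigma> i = a" "\<sigma> j = b" "i \<in> A" "j \<in> A" "i \<noteq> j"
      using A p by auto
    then have "p = g (min i j, max i j)" "(min i j, max i j) \<in> ?P"
      using p by (auto simp: g_def min_def max_def)
    then show "p \<in> g ` ?P" by (rule image_eqI)
  qed
  ultimately show ?thesis by (simp add: bij_betw_def g_def)
qed

lemma prod_ordered_pairs_permute:
  fixes H :: "'a::linorder \<Rightarrow> 'a \<Rightarrow> 'b::comm_monoid_mult"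
  assumes \<sigma>: "\<sigma> permutes A" and H: "\<And>i j. H i j = H j i"
  shows "(\<Prod>(i, j)\<in>{(i, j). i \<in> A \<and> j \<in> A \<and> i < j}. H (\<sigma> i) (\<sigma> j))
       = (\<Prod>(i, j)\<in>{(i, j). i \<in> A \<and> j \<in> A \<and> i < j}. H i j)"
proof -
  have "case_prod H (min (\<sigma> i) (\<sigma> j), max (\<sigma> i) (\<sigma> j)) = H (\<sigma> i) (\<sigma> j)" for i j
    using H by (auto simp: min_def max_def)
  then show ?thesis
    using prod.reindex_bij_betw[OF bij_betw_sorted_pair_permutes[OF \<sigma>], of "case_prod H"]
    by (simp add: case_prod_beta' split_def)
qed

lemma permutes_strict_mono_on_eq_sorted_list:
  fixes x :: "nat \<Rightarrow> 'a::linorder"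
  assumes \<sigma>: "\<sigma> permutes {1..n}" and mono: "strict_mono_on {1..n} (x \<circ> \<sigma>)" and i: "i \<in> {1..n}"
  shows "x (\<sigma> i) = sorted_list_of_set (x ` {1..n}) ! (i - 1)"
proof -
  have "map (x \<circ> \<sigma>) [1..<Suc n] = sorted_list_of_set (x ` {1..n})"
  proof (rule strict_sorted_equal[symmetric])
    show "sorted_wrt (<) (map (x \<circ> \<sigma>) [1..<Suc n])"
      using mono by (auto simp: sorted_wrt_iff_nth_less strict_mono_on_def simp del: upt_Suc)
    have "(x \<circ> \<sigma>) ` {1..n} = x ` {1..n}"
      using permutes_image[OF \<sigma>] by (metis image_comp)
    then show "set (sorted_list_of_set (x ` {1..n})) = set (map (x \<circ> \<sigma>) [1..<Suc n])"
      by (simp add: atLeastLessThanSuc_atLeastAtMost del: upt_Suc)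
  qed simp
  moreover have "map (x \<circ> \<sigma>) [1..<Suc n] ! (i - 1) = x (\<sigma> i)"
    using i by (subst nth_map_upt) auto
  ultimately show ?thesis by simp
qed

lemma ex1_permutes_strict_mono_on:
  fixes x :: "nat \<Rightarrow> 'a::linorder"
  assumes inj: "inj_on x {1..n}"
  shows "\<exists>!\<sigma>. \<sigma> permutes {1..n} \<and> strict_mono_on {1..n} (x \<circ> \<sigma>)"
proof -
  define L where "L = sorted_list_of_set (x ` {1..n})"
  have L: "length L = n" "set L = x ` {1..n}" "sorted_wrt (<) L" "distinct L"
    using card_image[OF inj] by (auto simp: L_def)
  define \<sigma> where "\<sigma> i = (if i \<in> {1..n} then inv_into {1..n} x (L ! (i - 1)) else i)" for i
  have L_in: "L ! (i - 1) \<in> x ` {1..n}" if "i \<in> {1..n}" for i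
    using L(1,2) that nth_mem[of "i - 1" L] by auto
  have x\<sigma>: "x (\<sigma> i) = L ! (i - 1)" if "i \<in> {1..n}" for i
    using L_in[OF that] that by (simp add: \<sigma>_def f_inv_into_f)
  have "inj_on \<sigma> {1..n}"
  proof (rule inj_onI)
    fix i j assume ij: "i \<in> {1..n}" "j \<in> {1..n}" "\<sigma> i = \<sigma> j"
    then have "L ! (i - 1) = L ! (j - 1)" using x\<sigma> by metis
    moreover have "i - 1 < length L" "j - 1 < length L" using ij L(1) by auto
    ultimately show "i = j" using nth_eq_iff_index_eq[OF L(4), of "i - 1" "j - 1"] ij by auto
  qed
  moreover have "\<sigma> ` {1..n} \<subseteq> {1..n}"
    using L_in inv_into_into[of _ x "{1..n}"] by (auto simp: \<sigma>_def)
  ultimately have "bij_betw \<sigma> {1..n} {1..n}"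
    by (simp add: bij_betw_def endo_inj_surj)
  then have "\<sigma> permutes {1..n}"
    by (rule bij_imp_permutes) (auto simp: \<sigma>_def)
  moreover have "strict_mono_on {1..n} (x \<circ> \<sigma>)"
    using L(1,3) x\<sigma> by (auto simp: strict_mono_on_def sorted_wrt_iff_nth_less)
  moreover have "\<sigma>' = \<tau>" if "\<sigma>' permutes {1..n}" "strict_mono_on {1..n} (x \<circ> \<sigma>')"
    and "\<tau> permutes {1..n}" "strict_mono_on {1..n} (x \<circ> \<tau>)" for \<sigma>' \<tau>
  proof
    fix i
    show "\<sigma>' i = \<tau> i"
    proof (cases "i \<in> {1..n}")
      case True
      then have "x (\<sigma>' i) = x (\<tau> i)"
        using permutes_strict_mono_on_eq_sorted_list that by metis
      then show ?thesis
        using True inj permutes_in_image[OF that(1)] permutes_in_image[OF that(3)]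
        by (auto dest: inj_onD)
    qed (use that in \<open>simp add: permutes_not_in\<close>)
  qed
  ultimately show ?thesis by blast
qed

definition ordered_pairs :: "nat \<Rightarrow> (nat \<times> nat) set" where
  "ordered_pairs n = {(i, j). 1 \<le> i \<and> i < j \<and> j \<le> n}"

lemma ordered_pairs_eq: "ordered_pairs n = {(i, j). i \<in> {1..n} \<and> j \<in> {1..n} \<and> i < j}"
  by (auto simp: ordered_pairs_def)

lemma finite_ordered_pairs[simp]: "finite (ordered_pairs n)"
  by (rule finite_subset[of _ "{1..n} \<times> {1..n}"]) (auto simp: ordered_pairs_def)

lemma card_ordered_pairs: "card (ordered_pairs n) = n * (n - 1) div 2"
proof (induction n)
  case 0
  have "ordered_pairs 0 = {}" by (auto simp: ordered_pairs_def)
  then show ?case by simp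
next
  case (Suc n)
  have "ordered_pairs (Suc n) = ordered_pairs n \<union> (\<lambda>i. (i, Suc n)) ` {1..n}"
    by (auto simp: ordered_pairs_def le_Suc_eq)
  moreover have "ordered_pairs n \<inter> (\<lambda>i. (i, Suc n)) ` {1..n} = {}"
    by (auto simp: ordered_pairs_def)
  ultimately have "card (ordered_pairs (Suc n)) = n * (n - 1) div 2 + n"
    using Suc by (simp add: card_Un_disjoint card_image inj_on_def)
  also have "\<dots> = Suc n * (Suc n - 1) div 2"
    by (cases n) (simp_all add: algebra_simps)
  finally show ?case .
qed

definition selberg_weight :: "nat \<Rightarrow> nat \<Rightarrow> nat \<Rightarrow> nat \<Rightarrow> (nat \<Rightarrow> real) \<Rightarrow> real" where
  "selberg_weight n r s m x =
     (\<Prod>i\<in>{1..n}. x i ^ r * (1 - x i) ^ s) * (\<Prod>(i, j)\<in>ordered_pairs n. \<bar>x i - x j\<bar> ^ m)"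

definition ordered_unit_simplex :: "nat \<Rightarrow> (nat \<Rightarrow> real) set" where
  "ordered_unit_simplex n = {x. (\<forall>i\<in>{1..n}. 0 < x i \<and> x i < 1) \<and> strict_mono_on {1..n} x}"

lemma selberg_weight_permute:
  assumes \<sigma>: "\<sigma> permutes {1..n}"
  shows "selberg_weight n r s m (\<lambda>i\<in>{1..n}. x (\<sigma> i)) = selberg_weight n r s m x"
proof -
  have restrict: "selberg_weight n r s m (\<lambda>i\<in>{1..n}. x (\<sigma> i))
      = (\<Prod>i\<in>{1..n}. x (\<sigma> i) ^ r * (1 - x (\<sigma> i)) ^ s)
        * (\<Prod>(i, j)\<in>ordered_pairs n. \<bar>x (\<sigma> i) - x (\<sigma> j)\<bar> ^ m)"
    unfolding selberg_weight_def
    by (intro arg_cong2[where f = "(*)"] prod.cong) (auto simp: ordered_pairs_def)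
  have factors: "(\<Prod>i\<in>{1..n}. x (\<sigma> i) ^ r * (1 - x (\<sigma> i)) ^ s) = (\<Prod>i\<in>{1..n}. x i ^ r * (1 - x i) ^ s)"
    using prod.reindex_bij_betw[OF permutes_imp_bij[OF \<sigma>], of "\<lambda>i. x i ^ r * (1 - x i) ^ s"] .
  have pairs: "(\<Prod>(i, j)\<in>ordered_pairs n. \<bar>x (\<sigma> i) - x (\<sigma> j)\<bar> ^ m)
      = (\<Prod>(i, j)\<in>ordered_pairs n. \<bar>x i - x j\<bar> ^ m)"
    unfolding ordered_pairs_eq
    by (rule prod_ordered_pairs_permute[OF \<sigma>, of "\<lambda>a b. \<bar>x a - x b\<bar> ^ m"]) (simp add: abs_minus_commute)
  show ?thesis
    unfolding restrict factors pairs by (simp only: selberg_weight_def)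
qed

lemma measurable_selberg_weight[measurable]:
  "selberg_weight n r s m \<in> borel_measurable (lborel_on {1..n})"
proof -
  have x: "(\<lambda>x. x i) \<in> borel_measurable (lborel_on {1..n})" if "i \<in> {1..n}" for i
    using that by simp
  show ?thesis
    unfolding selberg_weight_def ordered_pairs_def
    by (intro borel_measurable_times borel_measurable_prod)
      (auto split: prod.split intro!: borel_measurable_power borel_measurable_diff
        borel_measurable_abs borel_measurable_times x)
qed

lemma sets_ordered_unit_simplex[measurable]:
  "{x \<in> space (lborel_on {1..n}). x \<in> ordered_unit_simplex n} \<in> sets (lborel_on {1..n})"
  unfolding ordered_unit_simplex_def strict_mono_on_def by measurable

lemma permute_mem_ordered_unit_simplex_iff:
  assumes \<sigma>: "\<sigma> permutes {1..n}"
  shows "(\<lambda>i\<in>{1..n}. x (\<sigma> i)) \<in> ordered_unit_simplex n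
    \<longleftrightarrow> (\<forall>i\<in>{1..n}. 0 < x i \<and> x i < 1) \<and> strict_mono_on {1..n} (x \<circ> \<sigma>)"
proof -
  have "(\<forall>i\<in>{1..n}. 0 < x (\<sigma> i) \<and> x (\<sigma> i) < 1) \<longleftrightarrow> (\<forall>i\<in>\<sigma> ` {1..n}. 0 < x i \<and> x i < 1)"
    by simp
  also have "\<dots> \<longleftrightarrow> (\<forall>i\<in>{1..n}. 0 < x i \<and> x i < 1)"
    by (simp only: permutes_image[OF \<sigma>])
  finally show ?thesis
    by (simp add: ordered_unit_simplex_def permutes_image[OF \<sigma>] strict_mono_on_def)
qed

lemma indicator_cube_eq_sum_permutes:
  fixes x :: "nat \<Rightarrow> real"
  assumes inj: "inj_on x {1..n}" and x01: "\<forall>i\<in>{1..n}. x i \<noteq> 0 \<and> x i \<noteq> 1"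
  shows "indicator {x. \<forall>i\<in>{1..n}. x i \<in> {0..1}} x
       = (\<Sum>\<sigma> | \<sigma> permutes {1..n}. indicator (ordered_unit_simplex n) (\<lambda>i\<in>{1..n}. x (\<sigma> i)) :: ennreal)"
proof (cases "\<forall>i\<in>{1..n}. x i \<in> {0..1}")
  case True
  let ?P = "{\<sigma>. \<sigma> permutes {1..n}}"
  from True x01 have x_open: "\<forall>i\<in>{1..n}. 0 < x i \<and> x i < 1" by fastforce
  obtain \<sigma>\<^sub>0 where \<sigma>\<^sub>0: "\<sigma>\<^sub>0 permutes {1..n}" "strict_mono_on {1..n} (x \<circ> \<sigma>\<^sub>0)"
    and unique: "\<And>\<sigma>. \<sigma> permutes {1..n} \<Longrightarrow> strict_mono_on {1..n} (x \<circ> \<sigma>) \<Longrightarrow> \<sigma> = \<sigma>\<^sub>0"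
    using ex1_permutes_strict_mono_on[OF inj] by blast
  have "(\<Sum>\<sigma>\<in>?P. indicator (ordered_unit_simplex n) (\<lambda>i\<in>{1..n}. x (\<sigma> i)) :: ennreal)
      = (\<Sum>\<sigma>\<in>?P. if \<sigma> = \<sigma>\<^sub>0 then 1 else 0)"
  proof (rule sum.cong)
    fix \<sigma> assume "\<sigma> \<in> ?P"
    then have "(\<lambda>i\<in>{1..n}. x (\<sigma> i)) \<in> ordered_unit_simplex n \<longleftrightarrow> \<sigma> = \<sigma>\<^sub>0"
      using permute_mem_ordered_unit_simplex_iff x_open \<sigma>\<^sub>0 unique by blast
    then show "indicator (ordered_unit_simplex n) (\<lambda>i\<in>{1..n}. x (\<sigma> i))
        = (if \<sigma> = \<sigma>\<^sub>0 then 1 else 0 :: ennreal)"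
      by (simp add: indicator_def)
  qed simp
  also have "\<dots> = 1"
    using \<sigma>\<^sub>0(1) finite_permutations[of "{1..n}"] by simp
  finally show ?thesis using True by simp
next
  case False
  then have "\<not> (\<forall>i\<in>{1..n}. 0 < x i \<and> x i < 1)" by fastforce
  then have "indicator (ordered_unit_simplex n) (\<lambda>i\<in>{1..n}. x (\<sigma> i)) = (0 :: ennreal)"
    if "\<sigma> permutes {1..n}" for \<sigma>
    using permute_mem_ordered_unit_simplex_iff[OF that] by simp
  then show ?thesis using False by simp
qed

lemma AE_lborel_on_inj_on_avoiding:
  assumes I: "finite I" and C: "finite C"
  shows "AE x in lborel_on I. inj_on x I \<and> (\<forall>i\<in>I. x i \<notin> C)"
proof -
  have "AE x in lborel_on I. \<forall>(i, j)\<in>I \<times> I. i \<noteq> j \<longrightarrow> x i \<noteq> x j"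
  proof (rule AE_finite_allI)
    fix p assume "p \<in> I \<times> I"
    then obtain i j where p: "p = (i, j)" "i \<in> I" "j \<in> I" by auto
    show "AE x in lborel_on I. case p of (i, j) \<Rightarrow> i \<noteq> j \<longrightarrow> x i \<noteq> x j"
    proof (cases "i = j")
      case False
      then have "AE x in lborel_on I. x i \<noteq> x j"
        using p by (intro AE_lborel_on_coordinate_neq I) auto
      then show ?thesis using p by simp
    qed (use p in simp)
  qed (use I in simp)
  moreover have "AE x in lborel_on I. \<forall>(i, c)\<in>I \<times> C. x i \<noteq> c"
    by (rule AE_finite_allI) (auto intro!: AE_lborel_on_coordinate_neq I C)
  ultimately show ?thesis
    by eventually_elim (auto simp: inj_on_def)
qed

lemma AE_indicator_cube_eq_sum_permutes:
  "AE x in lborel_on {1..n}. indicator {x. \<forall>i\<in>{1..n}. x i \<in> {0..1}} x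
     = (\<Sum>\<sigma> | \<sigma> permutes {1..n}. indicator (ordered_unit_simplex n) (\<lambda>i\<in>{1..n}. x (\<sigma> i)) :: ennreal)"
proof -
  have "AE x in lborel_on {1..n}. inj_on x {1..n} \<and> (\<forall>i\<in>{1..n}. x i \<notin> {0, 1})"
    by (rule AE_lborel_on_inj_on_avoiding) simp_all
  then show ?thesis
    by eventually_elim (rule indicator_cube_eq_sum_permutes, auto)
qed

lemma nn_integral_cube_symmetric:
  assumes f[measurable]: "f \<in> borel_measurable (lborel_on {1..n})"
    and f_sym: "\<And>\<sigma> x. \<sigma> permutes {1..n} \<Longrightarrow> f (\<lambda>i\<in>{1..n}. x (\<sigma> i)) = f x"
  shows "(\<integral>\<^sup>+x. indicator {x. \<forall>i\<in>{1..n}. x i \<in> {0..1}} x * f x \<partial>lborel_on {1..n})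
       = ennreal (fact n) * (\<integral>\<^sup>+x. indicator (ordered_unit_simplex n) x * f x \<partial>lborel_on {1..n})"
proof -
  let ?P = "{\<sigma>. \<sigma> permutes {1..n}}"
  define g where "g x = indicator (ordered_unit_simplex n) x * f x" for x
  have g[measurable]: "g \<in> borel_measurable (lborel_on {1..n})"
    unfolding g_def by measurable
  have "AE x in lborel_on {1..n}.
      indicator {x. \<forall>i\<in>{1..n}. x i \<in> {0..1}} x * f x = (\<Sum>\<sigma>\<in>?P. g (\<lambda>i\<in>{1..n}. x (\<sigma> i)))"
    using AE_indicator_cube_eq_sum_permutes[of n] unfolding g_def
    by eventually_elim (simp only: sum_distrib_right, intro sum.cong refl, simp only: mem_Collect_eq f_sym)
  then have "(\<integral>\<^sup>+x. indicator {x. \<forall>i\<in>{1..n}. x i \<in> {0..1}} x * f x \<partial>lborel_on {1..n})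
      = (\<integral>\<^sup>+x. (\<Sum>\<sigma>\<in>?P. g (\<lambda>i\<in>{1..n}. x (\<sigma> i))) \<partial>lborel_on {1..n})"
    by (rule nn_integral_cong_AE)
  also have "\<dots> = (\<Sum>\<sigma>\<in>?P. \<integral>\<^sup>+x. g (\<lambda>i\<in>{1..n}. x (\<sigma> i)) \<partial>lborel_on {1..n})"
  proof (rule nn_integral_sum)
    fix \<sigma> assume "\<sigma> \<in> ?P"
    then have "(\<lambda>x. \<lambda>i\<in>{1..n}. x (\<sigma> i)) \<in> measurable (lborel_on {1..n}) (lborel_on {1..n})"
      by (intro measurable_lborel_on_reindex) (simp add: permutes_image)
    then show "(\<lambda>x. g (\<lambda>i\<in>{1..n}. x (\<sigma> i))) \<in> borel_measurable (lborel_on {1..n})"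
      using g by (rule measurable_compose)
  qed
  also have "\<dots> = (\<Sum>\<sigma>\<in>?P. \<integral>\<^sup>+x. g x \<partial>lborel_on {1..n})"
  proof (rule sum.cong[OF refl])
    fix \<sigma> assume "\<sigma> \<in> ?P"
    then have "bij_betw \<sigma> {1..n} {1..n}" by (simp add: permutes_imp_bij)
    then show "(\<integral>\<^sup>+x. g (\<lambda>i\<in>{1..n}. x (\<sigma> i)) \<partial>lborel_on {1..n}) = (\<integral>\<^sup>+x. g x \<partial>lborel_on {1..n})"
      by (rule nn_integral_lborel_on_reindex[OF _ finite_atLeastAtMost g])
  qed
  also have "\<dots> = of_nat (card ?P) * (\<integral>\<^sup>+x. g x \<partial>lborel_on {1..n})"
    by simp
  also have "\<dots> = ennreal (fact n) * (\<integral>\<^sup>+x. g x \<partial>lborel_on {1..n})"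
    using card_permutations[of "{1..n}" n] by (simp add: ennreal_of_nat_eq_real_of_nat)
  finally show ?thesis by (simp add: g_def)
qed

lemma partial_sums_upto:
  assumes "i \<le> n"
  shows "partial_sums n t i = (\<Sum>k<Suc i. t k)"
  using assms by (simp add: partial_sums_def lessThan_Suc_atMost)

lemma partial_sums_pos_strict_mono_iff:
  fixes t :: "nat \<Rightarrow> real"
  shows "(\<forall>k\<in>{0..n}. 0 < t k) \<longleftrightarrow> 0 < partial_sums n t 0 \<and> strict_mono_on {0..n} (partial_sums n t)"
proof
  assume pos: "\<forall>k\<in>{0..n}. 0 < t k"
  have "partial_sums n t i < partial_sums n t j" if "i < j" "j \<le> n" for i j
  proof -
    have "(\<Sum>k\<in>{0..<Suc i}. t k) + (\<Sum>k\<in>{Suc i..<Suc j}. t k) = (\<Sum>k\<in>{0..<Suc j}. t k)"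
      by (rule sum.atLeastLessThan_concat) (use that in auto)
    then have "(\<Sum>k<Suc j. t k) = (\<Sum>k<Suc i. t k) + (\<Sum>k\<in>{Suc i..<Suc j}. t k)"
      by (simp only: atLeast0LessThan)
    moreover have "0 < (\<Sum>k\<in>{Suc i..<Suc j}. t k)"
      using pos that by (intro sum_pos) auto
    ultimately show ?thesis using that by (simp add: partial_sums_upto)
  qed
  then show "0 < partial_sums n t 0 \<and> strict_mono_on {0..n} (partial_sums n t)"
    using pos by (auto simp: partial_sums_upto strict_mono_on_def)
next
  assume sums: "0 < partial_sums n t 0 \<and> strict_mono_on {0..n} (partial_sums n t)"
  show "\<forall>k\<in>{0..n}. 0 < t k"
  proof
    fix k assume k: "k \<in> {0..n}"
    show "0 < t k"
    proof (cases k)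
      case 0
      then show ?thesis using sums by (simp add: partial_sums_upto)
    next
      case (Suc j)
      then have "partial_sums n t j < partial_sums n t k"
        using sums k by (auto intro: strict_mono_onD)
      then show ?thesis using Suc k by (simp add: partial_sums_upto)
    qed
  qed
qed

definition partial_sums_integrand :: "nat \<Rightarrow> nat \<Rightarrow> nat \<Rightarrow> nat \<Rightarrow> (nat \<Rightarrow> real) \<Rightarrow> ennreal" where
  "partial_sums_integrand n r s m u =
     indicator {u. 0 < u 0 \<and> strict_mono_on {0..n} u} u *
     ennreal ((\<Prod>i\<in>{1..n}. u (i - 1) ^ r * (u n - u (i - 1)) ^ s) *
              (\<Prod>(i, j)\<in>ordered_pairs n. (u (j - 1) - u (i - 1)) ^ m) * exp (- u n))"

lemma partial_sums_integrand_eq: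
  "indicator {t. \<forall>k\<in>{0..n}. 0 < t k} t *
     ennreal ((\<Prod>i\<in>{1..n}. (\<Sum>k\<in>{0..<i}. t k) ^ r * (\<Sum>k\<in>{i..n}. t k) ^ s) *
              (\<Prod>(i, j)\<in>{(i, j). 1 \<le> i \<and> i < j \<and> j \<le> n}. (\<Sum>k\<in>{i..<j}. t k) ^ m) *
              exp (- (\<Sum>k\<in>{0..n}. t k)))
   = partial_sums_integrand n r s m (partial_sums n t)"
proof -
  let ?u = "partial_sums n t"
  have prefix: "?u (i - 1) = (\<Sum>k\<in>{0..<i}. t k)" if "i \<in> {1..n}" for i
    using that partial_sums_upto[of "i - 1" n t] by (auto simp: atLeast0LessThan)
  have total: "?u n = (\<Sum>k\<in>{0..n}. t k)"
    by (simp add: partial_sums_def atLeast0AtMost)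
  have segment: "(\<Sum>k\<in>{0..<j}. t k) - (\<Sum>k\<in>{0..<i}. t k) = (\<Sum>k\<in>{i..<j}. t k)" if "i \<le> j" for i j
    using sum.atLeastLessThan_concat[of 0 i j t] that by simp
  have "(\<Prod>i\<in>{1..n}. (\<Sum>k\<in>{0..<i}. t k) ^ r * (\<Sum>k\<in>{i..n}. t k) ^ s)
      = (\<Prod>i\<in>{1..n}. ?u (i - 1) ^ r * (?u n - ?u (i - 1)) ^ s)"
  proof (rule prod.cong[OF refl])
    fix i assume i: "i \<in> {1..n}"
    show "(\<Sum>k\<in>{0..<i}. t k) ^ r * (\<Sum>k\<in>{i..n}. t k) ^ s = ?u (i - 1) ^ r * (?u n - ?u (i - 1)) ^ s"
      using prefix[OF i] segment[of i "Suc n"] i by (simp add: total atLeastLessThanSuc_atLeastAtMost)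
  qed
  moreover have "(\<Prod>(i, j)\<in>{(i, j). 1 \<le> i \<and> i < j \<and> j \<le> n}. (\<Sum>k\<in>{i..<j}. t k) ^ m)
      = (\<Prod>(i, j)\<in>ordered_pairs n. (?u (j - 1) - ?u (i - 1)) ^ m)"
    unfolding ordered_pairs_def
  proof (rule prod.cong[OF refl], clarify)
    fix i j assume "1 \<le> i" "i < j" "j \<le> n"
    then show "(\<Sum>k\<in>{i..<j}. t k) ^ m = (?u (j - 1) - ?u (i - 1)) ^ m"
      using prefix[of i] prefix[of j] segment[of i j] by simp
  qed
  ultimately show ?thesis
    by (simp add: partial_sums_integrand_def total partial_sums_pos_strict_mono_iff indicator_def)
qed

lemma measurable_partial_sums_integrand[measurable]:
  "partial_sums_integrand n r s m \<in> borel_measurable (lborel_on {0..n})"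
proof -
  have u: "(\<lambda>u. u i) \<in> borel_measurable (lborel_on {0..n})" if "i \<le> n" for i
    using that by simp
  have [measurable]: "{u \<in> space (lborel_on {0..n}). 0 < u 0 \<and> strict_mono_on {0..n} u}
      \<in> sets (lborel_on {0..n})"
    unfolding strict_mono_on_def by measurable
  have [measurable]:
    "(\<lambda>u. (\<Prod>i\<in>{1..n}. u (i - 1) ^ r * (u n - u (i - 1)) ^ s)) \<in> borel_measurable (lborel_on {0..n})"
    "(\<lambda>u. \<Prod>(i, j)\<in>ordered_pairs n. (u (j - 1) - u (i - 1)) ^ m) \<in> borel_measurable (lborel_on {0..n})"
    by (auto simp: ordered_pairs_def split: prod.split intro!: borel_measurable_prod
        borel_measurable_power borel_measurable_diff borel_measurable_times u)
  have [measurable]: "(\<lambda>u. u n) \<in> borel_measurable (lborel_on {0..n})" by (rule u) simp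
  show ?thesis
    unfolding partial_sums_integrand_def by measurable
qed

lemma partial_sums_integrand_eq_0:
  assumes "u n \<le> 0"
  shows "partial_sums_integrand n r s m u = 0"
proof -
  have "u 0 \<le> u n" if "strict_mono_on {0..n} u"
    using that by (rule strict_mono_on_leD) auto
  then have "u \<notin> {u. 0 < u 0 \<and> strict_mono_on {0..n} u}" using assms by auto
  then show ?thesis by (simp add: partial_sums_integrand_def)
qed

lemma strict_mono_on_scale_below_iff:
  assumes U: "0 < y n"
  shows "strict_mono_on {0..n} (scale_below n n y) \<longleftrightarrow> strict_mono_on {0..<n} y \<and> (\<forall>i<n. y i < 1)"
proof
  assume mono: "strict_mono_on {0..n} (scale_below n n y)"
  have "y i < y j" if "i < j" "j < n" for i j
    using strict_mono_onD[OF mono, of i j] that U by (simp add: scale_below_def)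
  moreover have "y i < 1" if "i < n" for i
    using strict_mono_onD[OF mono, of i n] that U by (simp add: scale_below_def)
  ultimately show "strict_mono_on {0..<n} y \<and> (\<forall>i<n. y i < 1)"
    by (auto intro: strict_mono_onI)
next
  assume y: "strict_mono_on {0..<n} y \<and> (\<forall>i<n. y i < 1)"
  show "strict_mono_on {0..n} (scale_below n n y)"
  proof (rule strict_mono_onI)
    fix i j assume "i \<in> {0..n}" "j \<in> {0..n}" "i < j"
    then consider "j < n" | "j = n" by force
    then show "scale_below n n y i < scale_below n n y j"
    proof cases
      case 1
      then have "y i < y j" using y strict_mono_onD[of "{0..<n}" y i j] \<open>i < j\<close> by auto
      then show ?thesis using 1 U \<open>i < j\<close> by (simp add: scale_below_def mult_strict_left_mono)
    next
      case 2
      then have "y i < 1" using y \<open>i < j\<close> by simp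
      then show ?thesis
        using 2 U \<open>i < j\<close> mult_strict_left_mono[of "y i" 1 "y n"] by (simp add: scale_below_def)
    qed
  qed
qed

lemma shift_mem_ordered_unit_simplex_iff:
  "(\<lambda>i\<in>{1..n}. y (i - 1)) \<in> ordered_unit_simplex n
    \<longleftrightarrow> (\<forall>i<n. 0 < y i \<and> y i < 1) \<and> strict_mono_on {0..<n} y"
proof -
  have "(\<forall>i\<in>{1..n}. 0 < y (i - 1) \<and> y (i - 1) < 1) \<longleftrightarrow> (\<forall>i<n. 0 < y i \<and> y i < 1)"
  proof (intro iffI allI impI ballI)
    fix i assume "\<forall>i\<in>{1..n}. 0 < y (i - 1) \<and> y (i - 1) < 1" "i < n"
    then show "0 < y i \<and> y i < 1" by (metis Suc_leI atLeastAtMost_iff diff_Suc_1 le_add1 plus_1_eq_Suc)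
  qed auto
  moreover have "strict_mono_on {1..n} (\<lambda>i\<in>{1..n}. y (i - 1)) \<longleftrightarrow> strict_mono_on {0..<n} y"
  proof
    assume mono: "strict_mono_on {1..n} (\<lambda>i\<in>{1..n}. y (i - 1))"
    show "strict_mono_on {0..<n} y"
    proof (rule strict_mono_onI)
      fix i j assume "i \<in> {0..<n}" "j \<in> {0..<n}" "i < j"
      then show "y i < y j" using strict_mono_onD[OF mono, of "Suc i" "Suc j"] by simp
    qed
  next
    assume mono: "strict_mono_on {0..<n} y"
    show "strict_mono_on {1..n} (\<lambda>i\<in>{1..n}. y (i - 1))"
    proof (rule strict_mono_onI)
      fix i j assume "i \<in> {1..n}" "j \<in> {1..n}" "i < j"
      then show "(\<lambda>i\<in>{1..n}. y (i - 1)) i < (\<lambda>i\<in>{1..n}. y (i - 1)) j"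
        using strict_mono_onD[OF mono, of "i - 1" "j - 1"] by simp
    qed
  qed
  ultimately show ?thesis by (simp add: ordered_unit_simplex_def)
qed

lemma scale_below_strict_mono_iff:
  assumes U: "0 < y n" and n: "0 < n"
  shows "(0 < scale_below n n y 0 \<and> strict_mono_on {0..n} (scale_below n n y))
    \<longleftrightarrow> (\<lambda>i\<in>{1..n}. y (i - 1)) \<in> ordered_unit_simplex n"
proof -
  have "0 < y i" if "strict_mono_on {0..<n} y" "0 < y 0" "i < n" for i
    using strict_mono_on_leD[OF that(1), of 0 i] that by simp
  then show ?thesis
    using strict_mono_on_scale_below_iff[where y = y and n = n, OF U] shift_mem_ordered_unit_simplex_iff[where y = y and n = n] U n
    by (auto simp: scale_below_def zero_less_mult_iff)
qed

lemma scale_below_shift: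
  "i \<in> {1..n} \<Longrightarrow> scale_below n n y (i - 1) = y n * (\<lambda>i\<in>{1..n}. y (i - 1)) i"
  by (auto simp: scale_below_def)

lemma prod_scale_below_weights:
  "(\<Prod>i\<in>{1..n}. scale_below n n y (i - 1) ^ r * (scale_below n n y n - scale_below n n y (i - 1)) ^ s)
   = y n ^ ((r + s) * n) *
     (\<Prod>i\<in>{1..n}. (\<lambda>i\<in>{1..n}. y (i - 1)) i ^ r * (1 - (\<lambda>i\<in>{1..n}. y (i - 1)) i) ^ s)"
proof -
  let ?x = "\<lambda>i\<in>{1..n}. y (i - 1)"
  have "(\<Prod>i\<in>{1..n}. scale_below n n y (i - 1) ^ r * (scale_below n n y n - scale_below n n y (i - 1)) ^ s)
      = (\<Prod>i\<in>{1..n}. y n ^ (r + s) * (?x i ^ r * (1 - ?x i) ^ s))"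
  proof (rule prod.cong[OF refl])
    fix i assume i: "i \<in> {1..n}"
    have "y n - y n * ?x i = y n * (1 - ?x i)" by (simp add: algebra_simps)
    then show "scale_below n n y (i - 1) ^ r * (scale_below n n y n - scale_below n n y (i - 1)) ^ s
        = y n ^ (r + s) * (?x i ^ r * (1 - ?x i) ^ s)"
      unfolding scale_below_shift[OF i] by (simp add: scale_below_def power_mult_distrib power_add mult_ac)
  qed
  also have "\<dots> = y n ^ ((r + s) * n) * (\<Prod>i\<in>{1..n}. ?x i ^ r * (1 - ?x i) ^ s)"
    by (simp add: prod.distrib power_mult[symmetric] mult.commute)
  finally show ?thesis .
qed

lemma prod_scale_below_differences:
  assumes simplex: "(\<lambda>i\<in>{1..n}. y (i - 1)) \<in> ordered_unit_simplex n"
  shows "(\<Prod>(i, j)\<in>ordered_pairs n. (scale_below n n y (j - 1) - scale_below n n y (i - 1)) ^ m)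
   = y n ^ (m * card (ordered_pairs n)) *
     (\<Prod>(i, j)\<in>ordered_pairs n. \<bar>(\<lambda>i\<in>{1..n}. y (i - 1)) i - (\<lambda>i\<in>{1..n}. y (i - 1)) j\<bar> ^ m)"
proof -
  let ?x = "\<lambda>i\<in>{1..n}. y (i - 1)"
  have "(\<Prod>(i, j)\<in>ordered_pairs n. (scale_below n n y (j - 1) - scale_below n n y (i - 1)) ^ m)
      = (\<Prod>(i, j)\<in>ordered_pairs n. y n ^ m * \<bar>?x i - ?x j\<bar> ^ m)"
  proof (intro prod.cong refl, clarify)
    fix i j assume "(i, j) \<in> ordered_pairs n"
    then have ij: "i \<in> {1..n}" "j \<in> {1..n}" "i < j" by (auto simp: ordered_pairs_def)
    have "strict_mono_on {1..n} ?x" using simplex by (simp add: ordered_unit_simplex_def)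
    then have "?x i < ?x j" using ij by (rule strict_mono_onD)
    then show "(scale_below n n y (j - 1) - scale_below n n y (i - 1)) ^ m = y n ^ m * \<bar>?x i - ?x j\<bar> ^ m"
      unfolding scale_below_shift[OF ij(1)] scale_below_shift[OF ij(2)]
      by (simp add: right_diff_distrib[symmetric] power_mult_distrib)
  qed
  also have "\<dots> = y n ^ (m * card (ordered_pairs n)) * (\<Prod>(i, j)\<in>ordered_pairs n. \<bar>?x i - ?x j\<bar> ^ m)"
    by (simp add: prod.distrib power_mult case_prod_beta')
  finally show ?thesis .
qed

lemma partial_sums_integrand_scale_below:
  assumes n: "0 < n"
  shows "partial_sums_integrand n r s m (scale_below n n y) * ennreal (y n ^ n)
    = ennreal (y n ^ ((r + s + 1) * n + m * card (ordered_pairs n)) * exp (- y n)) * indicator {0..} (y n)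
      * (indicator (ordered_unit_simplex n) (\<lambda>i\<in>{1..n}. y (i - 1))
         * ennreal (selberg_weight n r s m (\<lambda>i\<in>{1..n}. y (i - 1))))"
    (is "?L = ennreal (y n ^ ?N * exp (- y n)) * _ * (indicator _ ?x * _)")
proof (cases "0 < y n")
  case False
  then have "?L = 0"
    using partial_sums_integrand_eq_0[of "scale_below n n y" n] by (simp add: scale_below_def)
  moreover have "ennreal (y n ^ ?N * exp (- y n)) * indicator {0..} (y n) = 0"
    using False n by (cases "y n = 0") auto
  ultimately show ?thesis by (simp only: mult_zero_left)
next
  case True
  show ?thesis
  proof (cases "?x \<in> ordered_unit_simplex n")
    case False
    then show ?thesis
      using scale_below_strict_mono_iff[where y = y and n = n, OF True n]
      by (simp add: partial_sums_integrand_def indicator_def)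
  next
    case simplex: True
    let ?A = "\<Prod>i\<in>{1..n}. ?x i ^ r * (1 - ?x i) ^ s"
    let ?B = "\<Prod>(i, j)\<in>ordered_pairs n. \<bar>?x i - ?x j\<bar> ^ m"
    have "indicator {u. 0 < u 0 \<and> strict_mono_on {0..n} u} (scale_below n n y) = (1 :: ennreal)"
      using simplex scale_below_strict_mono_iff[where y = y and n = n, OF True n] by simp
    then have "?L = ennreal (y n ^ ((r + s) * n) * ?A * (y n ^ (m * card (ordered_pairs n)) * ?B)
        * exp (- y n)) * ennreal (y n ^ n)"
      unfolding partial_sums_integrand_def prod_scale_below_weights prod_scale_below_differences[OF simplex]
      by (simp add: scale_below_def)
    also have "\<dots> = ennreal (y n ^ ?N * exp (- y n) * (?A * ?B))"
      using True by (simp add: ennreal_mult'[symmetric] power_add mult_ac)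
    also have "\<dots> = ennreal (y n ^ ?N * exp (- y n)) * ennreal (selberg_weight n r s m ?x)"
      using True by (simp add: ennreal_mult' selberg_weight_def)
    finally show ?thesis
      using simplex True by simp
  qed
qed

lemma nn_integral_gamma_last_coordinate:
  assumes n: "0 < n" and F: "F \<in> borel_measurable (lborel_on {1..n})"
  shows "(\<integral>\<^sup>+y. ennreal (y n ^ N * exp (- y n)) * indicator {0..} (y n) * F (\<lambda>i\<in>{1..n}. y (i - 1))
            \<partial>lborel_on {0..n})
       = ennreal (fact N) * (\<integral>\<^sup>+x. F x \<partial>lborel_on {1..n})"
proof -
  have shift: "bij_betw (\<lambda>i. i - 1) {1..n} {0..<n}"
    by (rule bij_betw_byWitness[where f' = Suc]) auto
  have F_shift: "(\<lambda>y. F (\<lambda>i\<in>{1..n}. y (i - 1))) \<in> borel_measurable (lborel_on J)"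
    if "{0..<n} \<subseteq> J" for J
  proof -
    have "(\<lambda>i. i - 1) ` {1..n} \<subseteq> J" using that by (auto simp: subset_iff)
    then show ?thesis
      using F by (rule measurable_compose[OF measurable_lborel_on_reindex])
  qed
  have "(\<integral>\<^sup>+y. ennreal (y n ^ N * exp (- y n)) * indicator {0..} (y n) * F (\<lambda>i\<in>{1..n}. y (i - 1))
            \<partial>lborel_on (insert n {0..<n}))
      = (\<integral>\<^sup>+v. ennreal (v ^ N * exp (- v)) * indicator {0..} v \<partial>lborel)
        * (\<integral>\<^sup>+y. F (\<lambda>i\<in>{1..n}. y (i - 1)) \<partial>lborel_on {0..<n})"
  proof (rule nn_integral_lborel_on_insert_factor)
    show "(\<lambda>y. F (\<lambda>i\<in>{1..n}. y (i - 1))) \<in> borel_measurable (lborel_on (insert n {0..<n}))"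
      by (rule F_shift) auto
    show "(\<lambda>y. F (\<lambda>i\<in>{1..n}. y (i - 1))) \<in> borel_measurable (lborel_on {0..<n})"
      by (rule F_shift) simp
    fix y :: "nat \<Rightarrow> real" and v :: real
    have "(\<lambda>i\<in>{1..n}. (y(n := v)) (i - 1)) = (\<lambda>i\<in>{1..n}. y (i - 1))"
      by (rule restrict_ext) auto
    then show "F (\<lambda>i\<in>{1..n}. (y(n := v)) (i - 1)) = F (\<lambda>i\<in>{1..n}. y (i - 1))" by simp
  qed auto
  also have "\<dots> = ennreal (fact N) * (\<integral>\<^sup>+x. F x \<partial>lborel_on {1..n})"
    unfolding nn_integral_lborel_on_reindex[OF shift finite_atLeastAtMost F] nn_intergal_power_times_exp_Ici
    by simp
  moreover have "{0..n} = insert n {0..<n}" by auto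
  ultimately show ?thesis by simp
qed

lemma nn_integral_exp_integrand_eq_ordered:
  fixes n r s m :: nat
  assumes n: "0 < n"
  shows "(\<integral>\<^sup>+ t. indicator {t. \<forall>k\<in>{0..n}. 0 < t k} t *
            ennreal ((\<Prod>i\<in>{1..n}. (\<Sum>k\<in>{0..<i}. t k) ^ r * (\<Sum>k\<in>{i..n}. t k) ^ s) *
                     (\<Prod>(i, j)\<in>{(i, j). 1 \<le> i \<and> i < j \<and> j \<le> n}. (\<Sum>k\<in>{i..<j}. t k) ^ m) *
                     exp (- (\<Sum>k\<in>{0..n}. t k)))
          \<partial>lborel_on {0..n})
       = ennreal (fact ((r + s + 1) * n + m * card (ordered_pairs n))) *
         (\<integral>\<^sup>+x. indicator (ordered_unit_simplex n) x * ennreal (selberg_weight n r s m x)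
            \<partial>lborel_on {1..n})"
proof -
  let ?N = "(r + s + 1) * n + m * card (ordered_pairs n)"
  have "(\<integral>\<^sup>+ t. indicator {t. \<forall>k\<in>{0..n}. 0 < t k} t *
            ennreal ((\<Prod>i\<in>{1..n}. (\<Sum>k\<in>{0..<i}. t k) ^ r * (\<Sum>k\<in>{i..n}. t k) ^ s) *
                     (\<Prod>(i, j)\<in>{(i, j). 1 \<le> i \<and> i < j \<and> j \<le> n}. (\<Sum>k\<in>{i..<j}. t k) ^ m) *
                     exp (- (\<Sum>k\<in>{0..n}. t k)))
          \<partial>lborel_on {0..n})
      = (\<integral>\<^sup>+t. partial_sums_integrand n r s m (partial_sums n t) \<partial>lborel_on {0..n})"
    by (simp only: partial_sums_integrand_eq)
  also have "\<dots> = (\<integral>\<^sup>+u. partial_sums_integrand n r s m u \<partial>lborel_on {0..n})"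
    by (rule nn_integral_partial_sums) auto
  also have "\<dots> = (\<integral>\<^sup>+y. partial_sums_integrand n r s m (scale_below n n y) * ennreal (y n ^ n)
      \<partial>lborel_on {0..n})"
    by (rule nn_integral_scale_below[symmetric]) (auto intro: partial_sums_integrand_eq_0)
  also have "\<dots> = (\<integral>\<^sup>+y. ennreal (y n ^ ?N * exp (- y n)) * indicator {0..} (y n) *
      (indicator (ordered_unit_simplex n) (\<lambda>i\<in>{1..n}. y (i - 1))
       * ennreal (selberg_weight n r s m (\<lambda>i\<in>{1..n}. y (i - 1)))) \<partial>lborel_on {0..n})"
    by (simp only: partial_sums_integrand_scale_below[OF n])
  also have "\<dots> = ennreal (fact ?N) *
      (\<integral>\<^sup>+x. indicator (ordered_unit_simplex n) x * ennreal (selberg_weight n r s m x) \<partial>lborel_on {1..n})"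
    by (rule nn_integral_gamma_last_coordinate[OF n]) measurable
  finally show ?thesis .
qed

lemma nn_integral_selberg_eq_ordered:
  "(\<integral>\<^sup>+x. indicator {x. \<forall>i\<in>{1..n}. x i \<in> {0..1}} x * ennreal (selberg_weight n r s m x) \<partial>lborel_on {1..n})
   = ennreal (fact n) *
     (\<integral>\<^sup>+x. indicator (ordered_unit_simplex n) x * ennreal (selberg_weight n r s m x) \<partial>lborel_on {1..n})"
  by (rule nn_integral_cube_symmetric) (measurable, simp only: selberg_weight_permute)

theorem proposition4p13:
  fixes n r s m :: nat
  assumes "n > 0"
  shows "(\<integral>\<^sup>+ t. indicator {t. \<forall>k\<in>{0..n}. 0 < t k} t *
            ennreal ((\<Prod>i\<in>{1..n}. (\<Sum>k\<in>{0..<i}. t k) ^ r * (\<Sum>k\<in>{i..n}. t k) ^ s) *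
                     (\<Prod>(i, j)\<in>{(i, j). 1 \<le> i \<and> i < j \<and> j \<le> n}. (\<Sum>k\<in>{i..<j}. t k) ^ m) *
                     exp (- (\<Sum>k\<in>{0..n}. t k)))
          \<partial>(Pi\<^sub>M {0..n} (\<lambda>_. lborel)))
       = ennreal (fact ((r + s + 1) * n + m * n * (n - 1) div 2) / fact n) *
         (\<integral>\<^sup>+ x. indicator {x. \<forall>i\<in>{1..n}. x i \<in> {0..1}} x *
            ennreal ((\<Prod>i\<in>{1..n}. x i ^ r * (1 - x i) ^ s) *
                     (\<Prod>(i, j)\<in>{(i, j). 1 \<le> i \<and> i < j \<and> j \<le> n}. \<bar>x i - x j\<bar> ^ m))
          \<partial>(Pi\<^sub>M {1..n} (\<lambda>_. lborel)))"
proof -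
  let ?N = "(r + s + 1) * n + m * n * (n - 1) div 2"
  have "even (n * (n - 1))" by (cases "even n") auto
  then have N: "?N = (r + s + 1) * n + m * card (ordered_pairs n)"
    by (simp add: card_ordered_pairs div_mult_swap mult.assoc)
  let ?J = "\<integral>\<^sup>+x. indicator (ordered_unit_simplex n) x * ennreal (selberg_weight n r s m x)
    \<partial>lborel_on {1..n}"
  have "(\<integral>\<^sup>+ x. indicator {x. \<forall>i\<in>{1..n}. x i \<in> {0..1}} x *
            ennreal ((\<Prod>i\<in>{1..n}. x i ^ r * (1 - x i) ^ s) *
                     (\<Prod>(i, j)\<in>{(i, j). 1 \<le> i \<and> i < j \<and> j \<le> n}. \<bar>x i - x j\<bar> ^ m))
          \<partial>(Pi\<^sub>M {1..n} (\<lambda>_. lborel))) = ennreal (fact n) * ?J"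
    using nn_integral_selberg_eq_ordered[of n r s m] by (simp only: selberg_weight_def ordered_pairs_def)
  moreover have "ennreal (fact ?N / fact n) * ennreal (fact n) = ennreal (fact ?N)"
    by (simp add: ennreal_mult''[symmetric])
  ultimately show ?thesis
    unfolding nn_integral_exp_integrand_eq_ordered[OF assms] N[symmetric]
    by (simp only: mult.assoc[symmetric])
qed

end
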